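(* Let $A,B\in\mathrm{SL}_2\mathbb{Z}_{\ge0}$ be noncommuting and such that the pair $A,B$ is well oriented, and assume $\mathrm{tr}(A)<\mathrm{tr}(B)$ and $\mathrm{tr}(AB)<\mathrm{tr}(B^2)$. Then $b$ is the only optimal word.
   Context: $\mathrm{SL}_2\mathbb{Z}_{\ge0}$ denotes the $2\times2$ matrices with nonnegative integer entries and determinant $1$. Fixed points are taken for the Möbius action on $\partial\mathcal{H}=\mathbb{P}^1\mathbb{R}$; $\alpha^\pm$ ($\beta^\pm$) are the attracting/repelling fixed points of $A$ ($B$), equal to the unique fixed point if parabolic. With $\partial\mathcal{H}$ cyclically ordered and $[\alpha,\beta]$ the closed counterclockwise interval from $\alpha$ to $\beta$, let $I^+=\{\alpha^+\}$ if $\alpha^+=\beta^+$, and otherwise the one of $[\alpha^+,\beta^+],[\beta^+,\alpha^+]$ mapped into itself by both $A$ and $B$ (if it exists); define $I^-$ likewise with $A^{-1},B^{-1},\alpha^-,\beta^-$. The pair is coherently oriented if both exist, and well oriented if $A,B$ is coherently oriented but $A,B^{-1}$ is not. Words: $F_2^+$ is the free semigroup of nonempty words over $\{a,b\}$, $|w|$ the length, $\phi(a)=A,\phi(b)=B$, $[w]=\mathrm{tr}(\phi(w))$. Define $w\preceq u$ iff $[w^{|u|}]\le[u^{|w|}]$; $w$ is maximal if $u\preceq w$ for all $u$. A Lyndon word is one strictly smaller lexicographically ($a<b$) than each of its proper rotations. A complete set of optimal words is a set of pairwise distinct maximal Lyndon words such that every maximal word is a power of a rotation of one of them; it is unique if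 it exists, and its elements are the optimal words. *)

theory Defs
  imports "HOL-Analysis.Analysis"
begin

type_synonym mat2 = "real^2^2"

definition SL2Z_nonneg :: "mat2 set" where
  "SL2Z_nonneg = {M. (\<forall>i j. M$i$j \<in> \<int> \<and> M$i$j \<ge> 0) \<and> det M = 1}"

datatype bdry = Fin real | Infty

definition proj :: "real^2 \<Rightarrow> bdry" where
  "proj v = (if v$2 = 0 then Infty else Fin (v$1 / v$2))"

definition lift :: "bdry \<Rightarrow> real^2" where
  "lift p = (case p of Fin x \<Rightarrow> vector [x, 1] | Infty \<Rightarrow> vector [1, 0])"

text \<open>Moebius action z \<mapsto> (az+b)/(cz+d) on the boundary.\<close>
definition mob :: "mat2 \<Rightarrow> bdry \<Rightarrow> bdry" where
  "mob M p = proj (M *v lift p)"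

text \<open>For M of determinant 1 with trace \<ge> 2 the eigenvalues are
  (tr \<plusminus> sqrt(tr^2-4))/2; the attracting (repelling) fixed point is the
  eigendirection of the larger (smaller) eigenvalue. In the parabolic case
  both coincide with the unique fixed point.\<close>
definition lam_max :: "mat2 \<Rightarrow> real" where
  "lam_max M = (trace M + sqrt ((trace M)^2 - 4)) / 2"

definition lam_min :: "mat2 \<Rightarrow> real" where
  "lam_min M = (trace M - sqrt ((trace M)^2 - 4)) / 2"

definition attr_fix :: "mat2 \<Rightarrow> bdry" where
  "attr_fix M = (THE p. \<exists>v. v \<noteq> 0 \<and> M *v v = lam_max M *\<^sub>R v \<and> p = proj v)"

definition rep_fix :: "mat2 \<Rightarrow> bdry" where
  "rep_fix M = (THE p. \<exists>v. v \<noteq> 0 \<and> M *v v = lam_min M *\<^sub>R v \<and> p = proj v)"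

text \<open>Closed counterclockwise interval from p to q on \<partial>H: starting at p and
  moving in the increasing direction of R (passing through \<infinity>) until q.\<close>
definition cint :: "bdry \<Rightarrow> bdry \<Rightarrow> bdry set" where
  "cint p q = (case (p, q) of
     (Fin a, Fin b) \<Rightarrow>
        (if a \<le> b then {Fin x | x. a \<le> x \<and> x \<le> b}
         else {Fin x | x. a \<le> x} \<union> {Infty} \<union> {Fin x | x. x \<le> b})
   | (Fin a, Infty) \<Rightarrow> {Fin x | x. a \<le> x} \<union> {Infty}
   | (Infty, Fin b) \<Rightarrow> {Infty} \<union> {Fin x | x. x \<le> b}
   | (Infty, Infty) \<Rightarrow> {Infty})"

definition interval_exists :: "mat2 \<Rightarrow> mat2 \<Rightarrow> bdry \<Rightarrow> bdry \<Rightarrow> bool" where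
  "interval_exists F G p q \<longleftrightarrow>
     p = q \<or> (\<exists>J \<in> {cint p q, cint q p}. mob F ` J \<subseteq> J \<and> mob G ` J \<subseteq> J)"

definition coherently_oriented :: "mat2 \<Rightarrow> mat2 \<Rightarrow> bool" where
  "coherently_oriented A B \<longleftrightarrow>
     interval_exists A B (attr_fix A) (attr_fix B) \<and>
     interval_exists (matrix_inv A) (matrix_inv B) (rep_fix A) (rep_fix B)"

definition well_oriented :: "mat2 \<Rightarrow> mat2 \<Rightarrow> bool" where
  "well_oriented A B \<longleftrightarrow>
     coherently_oriented A B \<and> \<not> coherently_oriented A (matrix_inv B)"

datatype letter = La | Lb

definition letter_less :: "(letter \<times> letter) set" where
  "letter_less = {(La, Lb)}"

type_synonym word = "letter list"

definition phi_letter :: "mat2 \<Rightarrow> mat2 \<Rightarrow> letter \<Rightarrow> mat2" where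
  "phi_letter A B l = (case l of La \<Rightarrow> A | Lb \<Rightarrow> B)"

definition phi :: "mat2 \<Rightarrow> mat2 \<Rightarrow> word \<Rightarrow> mat2" where
  "phi A B w = foldr (\<lambda>l M. phi_letter A B l ** M) w (mat 1)"

definition trw :: "mat2 \<Rightarrow> mat2 \<Rightarrow> word \<Rightarrow> real" where
  "trw A B w = trace (phi A B w)"

definition wpow :: "word \<Rightarrow> nat \<Rightarrow> word" where
  "wpow w n = concat (replicate n w)"

definition wle :: "mat2 \<Rightarrow> mat2 \<Rightarrow> word \<Rightarrow> word \<Rightarrow> bool" where
  "wle A B w u \<longleftrightarrow> trw A B (wpow w (length u)) \<le> trw A B (wpow u (length w))"

definition maximal :: "mat2 \<Rightarrow> mat2 \<Rightarrow> word \<Rightarrow> bool" where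
  "maximal A B w \<longleftrightarrow> w \<noteq> [] \<and> (\<forall>u. u \<noteq> [] \<longrightarrow> wle A B u w)"

definition lyndon :: "word \<Rightarrow> bool" where
  "lyndon w \<longleftrightarrow> w \<noteq> [] \<and>
     (\<forall>k. 0 < k \<and> k < length w \<longrightarrow> (w, rotate k w) \<in> lexord letter_less)"

text \<open>A set (hence pairwise distinct elements) of maximal Lyndon words such that
  every maximal word is a power of a rotation of one of them.\<close>
definition complete_optimal :: "mat2 \<Rightarrow> mat2 \<Rightarrow> word set \<Rightarrow> bool" where
  "complete_optimal A B S \<longleftrightarrow>
     (\<forall>w \<in> S. maximal A B w \<and> lyndon w) \<and>
     (\<forall>u. maximal A B u \<longrightarrow>
        (\<exists>w \<in> S. \<exists>k j. 0 < k \<and> u = wpow (rotate j w) k))"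

end

theory Submission
  imports Defs
begin

(* In the basis formed by attracting eigenvectors a of A and b of B (independent, since A and B
   do not commute) A becomes upper triangular [[mu, p], [0, 1/mu]] and B lower triangular
   [[1/lam, 0], [s, lam]], with p >= 0, s > 0 and mu < lam because tr A < tr B.  Traces are
   integers, so tr(AB) < tr(B^2) means tr(AB) + 1 <= tr(B^2); this gap is exactly what makes the
   positive row vector r = (t, 1), which B multiplies by lam, strictly contracted below lam by A.
   Hence r phi(u) < lam^n r for every word u of length n containing a, and for a nonnegative
   matrix of determinant 1 this bounds the trace: tr phi(u) < lam^n + lam^-n = tr(B^n). *)

lemma matrix_matrix_mult_2: "((X::mat2) ** Y)$i$j = X$i$1 * Y$1$j + X$i$2 * Y$2$j"
  by (simp add: matrix_matrix_mult_def sum_2)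

lemma vector_matrix_mult_2: "(x v* (M::mat2))$j = x$1 * M$1$j + x$2 * M$2$j"
  by (simp add: vector_matrix_mult_def sum_2 mult.commute)

lemma matrix_vector_mult_2: "((M::mat2) *v x)$i = M$i$1 * x$1 + M$i$2 * x$2"
  by (simp add: matrix_vector_mult_def sum_2)

lemma trace_2: "trace (M::mat2) = M$1$1 + M$2$2"
  by (simp add: trace_def sum_2)

lemma nonneg_matrix_iff: "0 \<le> (M::'a::{ord,zero}^'n^'m) \<longleftrightarrow> (\<forall>i j. 0 \<le> M$i$j)"
  by (simp add: less_eq_vec_def)

lemma nonneg_matrix_matrix_mult:
  fixes X Y :: "'a::linordered_semiring_1^'n^'n"
  shows "0 \<le> X \<Longrightarrow> 0 \<le> Y \<Longrightarrow> 0 \<le> X ** Y"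
  by (simp add: nonneg_matrix_iff matrix_matrix_mult_def sum_nonneg)

lemma trace_similar:
  fixes X Y P :: "'a::field^'n^'n"
  assumes "X ** P = P ** Y" "invertible P"
  shows "trace X = trace Y"
proof -
  obtain Q where PQ: "P ** Q = mat 1" and QP: "Q ** P = mat 1"
    using assms(2) invertible_def by blast
  have "Y = Q ** (X ** P)"
    using assms(1) QP by (metis matrix_mul_assoc matrix_mul_lid)
  then have "trace Y = trace (X ** (P ** Q))"
    by (metis matrix_mul_assoc trace_mul_sym)
  then show ?thesis
    using PQ by simp
qed

lemma inner_pos_nonneg:
  fixes x y :: "real^'n"
  assumes "\<And>i. 0 < x$i" "0 \<le> y" "y \<noteq> 0"
  shows "0 < x \<bullet> y"
proof -
  obtain k where "y$k \<noteq> 0"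
    using assms(3) by (auto simp: vec_eq_iff)
  then have "0 < x$k * y$k"
    using assms(1,2) by (simp add: less_eq_vec_def order.not_eq_order_implies_strict)
  moreover have "0 \<le> x$i * y$i" for i
    using assms(1,2) by (simp add: less_eq_vec_def less_imp_le)
  ultimately have "0 < (\<Sum>i\<in>UNIV. x$i * y$i)"
    by (intro sum_pos2[of UNIV k]) simp_all
  then show ?thesis
    by (simp add: inner_vec_def)
qed

lemma matrix_vector_mult_scalar_plus_outer:
  fixes M :: "real^'n^'n"
  assumes "\<And>i j. M$i$j = (if i = j then c else 0) + a$i * w$j"
  shows "M *v x = c *\<^sub>R x + (w \<bullet> x) *\<^sub>R a"
proof -
  have "(M *v x)$i = c * x$i + a$i * (w \<bullet> x)" for i
    by (simp add: matrix_vector_mult_def assms distrib_right sum.distrib inner_vec_def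
        sum_distrib_left mult.assoc if_distrib[of "\<lambda>t. t * _"] cong: if_cong)
  then show ?thesis
    by (simp add: vec_eq_iff mult.commute)
qed

definition columns2 :: "real^2 \<Rightarrow> real^2 \<Rightarrow> mat2" where
  "columns2 a b = (\<chi> i. vector [a$i, b$i])"

lemma columns2_nth [simp]: "columns2 a b $ i $ 1 = a$i" "columns2 a b $ i $ 2 = b$i"
  by (simp_all add: columns2_def)

lemma matrix_mult_columns2:
  fixes M :: mat2
  assumes "M *v a = m11 *\<^sub>R a + m21 *\<^sub>R b" "M *v b = m12 *\<^sub>R a + m22 *\<^sub>R b"
  shows "M ** columns2 a b = columns2 a b ** vector [vector [m11, m12], vector [m21, m22]]"
  using assms by (simp add: vec_eq_iff forall_2 matrix_matrix_mult_2 matrix_vector_mult_2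
      algebra_simps)

section \<open>The function x + 1/x\<close>

lemma plus_inverse_eq_2_iff:
  fixes x :: real
  assumes "0 < x"
  shows "x + 1 / x = 2 \<longleftrightarrow> x = 1"
proof -
  have "x + 1 / x - 2 = (x - 1)\<^sup>2 / x"
    using assms by (simp add: field_simps power2_eq_square)
  then show ?thesis
    using assms by auto
qed

lemma exists_plus_inverse_eq:
  fixes T :: real
  assumes "2 \<le> T"
  obtains mu where "1 \<le> mu" "mu + 1 / mu = T"
proof
  define r where "r = sqrt (T\<^sup>2 - 4)"
  have "2\<^sup>2 \<le> T\<^sup>2"
    using assms by (intro power_mono) simp_all
  then have "0 \<le> T\<^sup>2 - 4"
    by simp
  then have r: "0 \<le> r" "r * r = T\<^sup>2 - 4"
    by (simp_all add: r_def flip: power2_eq_square)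
  show "1 \<le> (T + r) / 2"
    using assms r by simp
  show "(T + r) / 2 + 1 / ((T + r) / 2) = T"
    using assms r by (simp add: field_simps power2_eq_square)
qed

lemma plus_inverse_less_imp_less:
  fixes x y :: real
  assumes "1 \<le> x" "1 \<le> y" "x + 1 / x < y + 1 / y"
  shows "x < y"
proof (rule ccontr)
  assume "\<not> x < y"
  have "0 \<le> (x - y) * (1 - 1 / (x * y))"
  proof (rule mult_nonneg_nonneg)
    have "1 * 1 \<le> x * y"
      using assms(1,2) by (intro mult_mono) simp_all
    then show "0 \<le> 1 - 1 / (x * y)"
      by simp
  qed (use \<open>\<not> x < y\<close> in simp)
  also have "\<dots> = x + 1 / x - (y + 1 / y)"
    using assms(1,2) by (simp add: field_simps)
  finally show False
    using assms(3) by simp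
qed

lemma Rats_plus_inverse_in_Ints_eq_1:
  fixes l :: real
  assumes "l \<in> \<rat>" "0 < l" "l + 1 / l \<in> \<int>"
  shows "l = 1"
proof -
  obtain a b :: int where "0 < b" "coprime a b" and l: "l = of_int a / of_int b"
    using Rats_cases'[OF assms(1)] by metis
  then have "0 < a"
    using assms(2) by (simp add: zero_less_divide_iff)
  obtain n :: int where "l + 1 / l = of_int n"
    using assms(3) by (auto elim: Ints_cases)
  then have "real_of_int (a * a + b * b) = real_of_int (n * a * b)"
    using \<open>0 < a\<close> \<open>0 < b\<close> unfolding l by (simp add: field_simps)
  then have eq: "a * a + b * b = n * a * b"
    by (simp only: of_int_eq_iff)
  have "a * a = b * (n * a - b)" and "b * b = a * (n * b - a)"
    using eq by (simp_all add: algebra_simps)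
  then have "b dvd a * a" and "a dvd b * b"
    by (metis dvdI)+
  moreover have "coprime (a * a) b" and "coprime (b * b) a"
    using \<open>coprime a b\<close> by (simp_all add: coprime_commute)
  ultimately have "is_unit b" and "is_unit a"
    using coprime_common_divisor dvd_refl by metis+
  then show "l = 1"
    using \<open>0 < a\<close> \<open>0 < b\<close> l by simp
qed

lemma phi_Nil [simp]: "phi A B [] = mat 1"
  by (simp add: phi_def)

lemma phi_Cons [simp]: "phi A B (x # u) = phi_letter A B x ** phi A B u"
  by (simp add: phi_def)

lemma phi_nonneg: "0 \<le> A \<Longrightarrow> 0 \<le> B \<Longrightarrow> 0 \<le> phi A B u"
proof (induction u)
  case (Cons x u)
  then show ?case
    by (cases x) (simp_all add: phi_letter_def nonneg_matrix_matrix_mult)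
qed (simp add: nonneg_matrix_iff mat_def)

lemma det_phi: "det A = 1 \<Longrightarrow> det B = 1 \<Longrightarrow> det (phi A B u) = 1"
  by (induction u) (auto simp: phi_letter_def det_mul split: letter.split)

lemma phi_similar:
  assumes "A ** P = P ** A'" "B ** P = P ** B'"
  shows "phi A B u ** P = P ** phi A' B' u"
proof (induction u)
  case (Cons x u)
  have "phi_letter A B x ** P = P ** phi_letter A' B' x"
    using assms by (cases x) (simp_all add: phi_letter_def)
  then show ?case
    using Cons.IH by (metis matrix_mul_assoc phi_Cons)
qed simp

lemma vector_matrix_mult_mono:
  fixes M :: "'a::linordered_semiring_1^'n^'m"
  assumes "0 \<le> M" "\<And>i. x$i \<le> y$i"
  shows "(x v* M)$j \<le> (y v* M)$j"
  using assms by (simp add: vector_matrix_mult_def nonneg_matrix_iff sum_mono mult_right_mono)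

lemma vector_matrix_mult_strict_mono:
  fixes M :: mat2
  assumes "0 \<le> M" "det M \<noteq> 0" "\<And>i. x$i < y$i"
  shows "(x v* M)$j < (y v* M)$j"
proof -
  have "M$1$j \<noteq> 0 \<or> M$2$j \<noteq> 0"
    using assms(2) exhaust_2[of j] by (auto simp: det_2)
  moreover have "(y v* M)$j - (x v* M)$j = (y$1 - x$1) * M$1$j + (y$2 - x$2) * M$2$j"
    by (simp add: vector_matrix_mult_2 algebra_simps)
  moreover have "0 < y$i - x$i" for i
    using assms(3) by simp
  ultimately show ?thesis
    using assms(1) unfolding nonneg_matrix_iff
    by (smt (verit) mult_pos_pos mult_nonneg_nonneg order.not_eq_order_implies_strict)
qed

lemma phi_row_bound:
  fixes A B :: mat2
  assumes "0 \<le> A" "0 \<le> B" "det A = 1" "det B = 1" "0 < lam"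
    and A_lt: "\<And>j. (r v* A)$j < lam * r$j" and B_le: "\<And>j. (r v* B)$j \<le> lam * r$j"
  shows "(r v* phi A B u)$j \<le> lam ^ length u * r$j"
    and "La \<in> set u \<Longrightarrow> (r v* phi A B u)$j < lam ^ length u * r$j"
proof (induction u arbitrary: j)
  case Nil
  { case 1 show ?case by simp }
  { case 2 then show ?case by simp }
next
  case (Cons x u)
  define M where "M = phi A B u"
  have M: "0 \<le> M" "det M \<noteq> 0"
    using phi_nonneg det_phi assms(1-4) by (simp_all add: M_def)
  have scale: "((lam *s r) v* M)$j = lam * (r v* M)$j" for j
    by (simp add: vector_matrix_mult_2 algebra_simps)
  have step: "(r v* phi A B (x # u))$j = ((r v* phi_letter A B x) v* M)$j" for j
    by (simp add: M_def vector_matrix_mul_assoc)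
  have lam_bound: "lam * (r v* M)$j \<le> lam ^ length (x # u) * r$j" for j
    using Cons.IH(1)[of j] \<open>0 < lam\<close> by (simp add: M_def)
  have X_step: "((r v* phi_letter A B x) v* M)$j \<le> lam * (r v* M)$j" for j
  proof -
    have "(r v* phi_letter A B x)$i \<le> (lam *s r)$i" for i
      using A_lt[of i] B_le[of i] by (cases x) (simp_all add: phi_letter_def)
    then show ?thesis
      using vector_matrix_mult_mono[OF M(1)] scale by metis
  qed
  { case 1
    show ?case
      using X_step[of j] lam_bound[of j] step by simp
  }
  { case 2
    show ?case
    proof (cases x)
      case La
      have "((r v* A) v* M)$j < ((lam *s r) v* M)$j"
        using vector_matrix_mult_strict_mono[OF M] A_lt by simp
      then show ?thesis
        using La lam_bound[of j] step scale by (simp add: phi_letter_def)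
    next
      case Lb
      then have "lam * (r v* M)$j < lam ^ length (x # u) * r$j"
        using 2 Cons.IH(2)[of j] \<open>0 < lam\<close> by (simp add: M_def)
      then show ?thesis
        using X_step[of j] step by simp
    qed
  }
qed

lemma trace_lt_of_row_bound:
  fixes M :: mat2
  assumes "0 \<le> M" "det M = 1" "\<And>i. 0 < r$i" "\<And>j. (r v* M)$j < L * r$j"
  shows "trace M < L + 1 / L"
proof -
  have nonneg: "0 \<le> M$i$j" for i j
    using assms(1) by (simp add: nonneg_matrix_iff)
  have row1: "M$2$1 * r$2 < (L - M$1$1) * r$1" and row2: "M$1$2 * r$1 < (L - M$2$2) * r$2"
    using assms(4)[of 1] assms(4)[of 2] by (simp_all add: vector_matrix_mult_2 algebra_simps)
  have "0 \<le> M$2$1 * r$2"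
    using nonneg[of 2 1] assms(3)[of 2] by simp
  then have "0 < (L - M$1$1) * r$1"
    using row1 by linarith
  then have "0 < L"
    using nonneg[of 1 1] assms(3)[of 1] by (simp add: zero_less_mult_iff)
  have "(M$2$1 * r$2) * (M$1$2 * r$1) < ((L - M$1$1) * r$1) * ((L - M$2$2) * r$2)"
    using nonneg[of 1 2] assms(3)[of 1] \<open>0 \<le> M$2$1 * r$2\<close>
    by (intro mult_strict_mono'[OF row1 row2]) simp_all
  then have "(M$1$2 * M$2$1) * (r$1 * r$2) < ((L - M$1$1) * (L - M$2$2)) * (r$1 * r$2)"
    by (simp add: ac_simps)
  then have "M$1$2 * M$2$1 < (L - M$1$1) * (L - M$2$2)"
    using assms(3)[of 1] assms(3)[of 2] by (simp add: mult_less_cancel_right_pos)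
  then have "L * trace M < L * L + 1"
    using assms(2) by (simp add: det_2 trace_2 algebra_simps)
  then show ?thesis
    using \<open>0 < L\<close> by (simp add: field_simps)
qed

section \<open>The triangular normal form\<close>

definition upper_triangular2 :: "real \<Rightarrow> real \<Rightarrow> mat2" where
  "upper_triangular2 mu p = vector [vector [mu, p], vector [0, 1 / mu]]"

definition lower_triangular2 :: "real \<Rightarrow> real \<Rightarrow> mat2" where
  "lower_triangular2 lam s = vector [vector [1 / lam, 0], vector [s, lam]]"

lemma phi_replicate_lower_triangular:
  fixes B :: mat2
  assumes "B$1$2 = 0"
  shows "phi A B (replicate n Lb)$1$1 = B$1$1 ^ n" "phi A B (replicate n Lb)$1$2 = 0"
    "phi A B (replicate n Lb)$2$2 = B$2$2 ^ n"
  by (induction n) (simp_all add: phi_letter_def matrix_matrix_mult_2 mat_def assms)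

lemma trace_phi_replicate_lower_triangular2:
  "trace (phi A (lower_triangular2 lam s) (replicate n Lb)) = lam ^ n + 1 / lam ^ n"
  by (simp add: trace_2 phi_replicate_lower_triangular lower_triangular2_def power_one_over)

text \<open>The row vector \<open>r = (t, 1)\<close> is a left eigenvector of the lower triangular matrix for
  \<open>\<lambda>\<close>; the trace gap between \<open>AB\<close> and \<open>B\<^sup>2\<close> is exactly what makes \<open>r\<close> strictly
  contracted by the upper triangular one.\<close>

lemma trace_phi_lt_triangular2:
  assumes "1 \<le> mu" "mu < lam" "0 \<le> p" "0 < s"
    and gap: "trace (upper_triangular2 mu p ** lower_triangular2 lam s) + 1
      \<le> trace (lower_triangular2 lam s ** lower_triangular2 lam s)"
    and "La \<in> set u"
  shows "trace (phi (upper_triangular2 mu p) (lower_triangular2 lam s) u)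
    < lam ^ length u + 1 / lam ^ length u"
proof -
  define A where "A = upper_triangular2 mu p"
  define B where "B = lower_triangular2 lam s"
  have "0 < mu" "1 < lam" "0 < lam" "1 / lam < 1"
    using assms(1,2) by simp_all
  define t where "t = s / (lam - 1 / lam)"
  have "0 < lam - 1 / lam"
    using \<open>1 < lam\<close> \<open>1 / lam < 1\<close> by linarith
  then have "0 < t" "t * (lam - 1 / lam) = s"
    using \<open>0 < s\<close> by (simp_all add: t_def)
  define r :: "real^2" where "r = vector [t, 1]"
  have r_pos: "0 < r$i" for i
    using \<open>0 < t\<close> exhaust_2[of i] by (auto simp: r_def)
  have B_eigen: "(r v* B)$j \<le> lam * r$j" for j
    using \<open>t * (lam - 1 / lam) = s\<close> exhaust_2[of j]
    by (auto simp: r_def B_def lower_triangular2_def vector_matrix_mult_2 algebra_simps)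
  have "p * s < (lam - 1 / mu) * (lam - 1 / lam)"
  proof -
    have "p * s \<le> lam\<^sup>2 + 1 / lam\<^sup>2 - 1 - mu / lam - lam / mu"
      using gap by (simp add: upper_triangular2_def lower_triangular2_def trace_2
          matrix_matrix_mult_2 power2_eq_square)
    moreover have "0 < mu + 1 / mu - 1 / lam"
      using \<open>0 < mu\<close> \<open>1 \<le> mu\<close> \<open>1 / lam < 1\<close> by (smt (verit) divide_pos_pos)
    then have "0 < (1 / lam) * (mu + 1 / mu - 1 / lam)"
      using \<open>1 < lam\<close> by simp
    moreover have "(lam - 1 / mu) * (lam - 1 / lam) =
        (lam\<^sup>2 + 1 / lam\<^sup>2 - 1 - mu / lam - lam / mu) + (1 / lam) * (mu + 1 / mu - 1 / lam)"
      using \<open>0 < mu\<close> \<open>1 < lam\<close> by (simp add: field_simps power2_eq_square)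
    ultimately show ?thesis
      by linarith
  qed
  then have "p * s / (lam - 1 / lam) < lam - 1 / mu"
    using \<open>0 < lam - 1 / lam\<close> by (simp add: pos_divide_less_eq)
  moreover have "t * p = p * s / (lam - 1 / lam)"
    by (simp add: t_def)
  ultimately have "t * p + 1 / mu < lam"
    by linarith
  then have A_contracts: "(r v* A)$j < lam * r$j" for j
    using \<open>mu < lam\<close> \<open>0 < t\<close> exhaust_2[of j]
    by (auto simp: r_def A_def upper_triangular2_def vector_matrix_mult_2 algebra_simps)
  have "0 \<le> A" "0 \<le> B" "det A = 1" "det B = 1"
    using \<open>0 < mu\<close> \<open>1 < lam\<close> \<open>0 \<le> p\<close> \<open>0 < s\<close>
    by (auto simp: A_def B_def upper_triangular2_def lower_triangular2_def det_2
        nonneg_matrix_iff forall_2)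
  note bound = phi_row_bound(2)[OF this \<open>0 < lam\<close> A_contracts B_eigen \<open>La \<in> set u\<close>]
  show ?thesis
    using trace_lt_of_row_bound[OF phi_nonneg det_phi r_pos bound] \<open>0 \<le> A\<close> \<open>0 \<le> B\<close>
      \<open>det A = 1\<close> \<open>det B = 1\<close> by (simp add: A_def B_def)
qed

lemma SL2Z_nonneg_diagonal_ge_1:
  assumes "M \<in> SL2Z_nonneg"
  shows "1 \<le> M$1$1" "1 \<le> M$2$2"
proof -
  have int: "M$i$j \<in> \<int>" "0 \<le> M$i$j" for i j
    using assms by (auto simp: SL2Z_nonneg_def)
  have "M$1$1 * M$2$2 = 1 + M$1$2 * M$2$1"
    using assms by (simp add: SL2Z_nonneg_def det_2)
  moreover have "0 \<le> M$1$2 * M$2$1"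
    using int(2) by simp
  ultimately have "M$1$1 \<noteq> 0" "M$2$2 \<noteq> 0"
    by auto
  then show "1 \<le> M$1$1" "1 \<le> M$2$2"
    using int Ints_nonzero_abs_ge1 by (metis abs_of_nonneg)+
qed

text \<open>\<open>M - (1/\<mu>) I\<close> is singular, hence of rank one; the diagonal entries being at least 1
  is what makes both rank-one factors nonnegative.\<close>

lemma SL2Z_nonneg_rank_one_decomposition:
  assumes "M \<in> SL2Z_nonneg" "M \<noteq> mat 1"
  obtains mu a w where "1 \<le> mu" "trace M = mu + 1 / mu" "0 \<le> a" "a \<noteq> 0" "0 \<le> w"
    "\<And>x. M *v x = (1 / mu) *\<^sub>R x + (w \<bullet> x) *\<^sub>R a" "M *v a = mu *\<^sub>R a"
    "1 < mu \<Longrightarrow> (\<forall>i. 0 < a$i) \<and> (\<forall>i. 0 < w$i)"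
proof -
  have nonneg: "0 \<le> M$i$j" for i j
    using assms(1) by (simp add: SL2Z_nonneg_def)
  have det: "M$1$1 * M$2$2 - M$1$2 * M$2$1 = 1"
    using assms(1) by (simp add: SL2Z_nonneg_def det_2)
  note diag = SL2Z_nonneg_diagonal_ge_1[OF assms(1)]
  obtain mu where mu: "1 \<le> mu" "mu + 1 / mu = trace M"
    using exists_plus_inverse_eq[of "trace M"] diag by (auto simp: trace_2)
  have inv_mu: "1 / mu = M$1$1 + M$2$2 - mu" "1 / mu \<le> 1"
    using mu by (simp_all add: trace_2)
  have quadratic: "(mu - M$1$1) * (mu - M$2$2) = M$1$2 * M$2$1"
    using mu det by (simp add: trace_2 field_simps)
  show thesis
  proof (cases "M$1$2 = 0")
    case False
    define a :: "real^2" where "a = vector [M$1$2, mu - M$1$1]"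
    define w :: "real^2" where "w = vector [(mu - M$2$2) / M$1$2, 1]"
    have "M$i$j = (if i = j then 1 / mu else 0) + a$i * w$j" for i j
    proof -
      have "M$2$1 = (mu - M$1$1) * ((mu - M$2$2) / M$1$2)"
        using quadratic False by (simp add: field_simps)
      then show ?thesis
        using exhaust_2[of i] exhaust_2[of j] False by (auto simp: a_def w_def inv_mu(1))
    qed
    note decomposition = matrix_vector_mult_scalar_plus_outer[OF this]
    show thesis
    proof
      show "0 \<le> a" "0 \<le> w" "a \<noteq> 0"
        using nonneg[of 1 2] False diag inv_mu
        by (auto simp: a_def w_def less_eq_vec_def forall_2 vec_eq_iff)
      have "w \<bullet> a = mu - 1 / mu"
        using False by (simp add: a_def w_def inner_vec_def sum_2 inv_mu(1))
      then show "M *v a = mu *\<^sub>R a"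
        unfolding decomposition by (simp flip: scaleR_left_distrib)
      show "(\<forall>i. 0 < a$i) \<and> (\<forall>i. 0 < w$i)" if "1 < mu"
      proof -
        have "1 / mu < 1"
          using that by simp
        then have "M$1$1 < mu" "M$2$2 < mu"
          using inv_mu(1) diag by linarith+
        then show ?thesis
          using nonneg[of 1 2] False by (auto simp: a_def w_def forall_2)
      qed
    qed (use mu decomposition in auto)
  next
    case True
    then have "M$1$1 * M$2$2 = 1"
      using det by simp
    moreover have "M$1$1 * 1 \<le> M$1$1 * M$2$2" "1 * M$2$2 \<le> M$1$1 * M$2$2"
      using diag by (simp_all add: mult_left_mono mult_right_mono)
    ultimately have "M$1$1 = 1" "M$2$2 = 1"
      using diag by linarith+
    then have "mu = 1"
      using mu plus_inverse_eq_2_iff by (simp add: trace_2)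
    have "M$2$1 \<noteq> 0"
      using True \<open>M$1$1 = 1\<close> \<open>M$2$2 = 1\<close> assms(2) by (auto simp: vec_eq_iff forall_2 mat_def)
    define a :: "real^2" where "a = vector [0, 1]"
    define w :: "real^2" where "w = vector [M$2$1, 0]"
    have "M$i$j = (if i = j then 1 / mu else 0) + a$i * w$j" for i j
      using True \<open>mu = 1\<close> \<open>M$1$1 = 1\<close> \<open>M$2$2 = 1\<close> exhaust_2[of i] exhaust_2[of j]
      by (auto simp: a_def w_def)
    note decomposition = matrix_vector_mult_scalar_plus_outer[OF this]
    show thesis
    proof
      show "0 \<le> a" "0 \<le> w" "a \<noteq> 0"
        using nonneg[of 2 1] by (auto simp: a_def w_def less_eq_vec_def forall_2 vec_eq_iff)
      show "M *v a = mu *\<^sub>R a"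
        unfolding decomposition by (simp add: \<open>mu = 1\<close> a_def w_def inner_vec_def sum_2)
    qed (use mu decomposition \<open>mu = 1\<close> in auto)
  qed
qed

lemma common_eigenvector_imp_commute:
  fixes A B :: mat2
  assumes A_int: "\<And>i j. A$i$j \<in> \<int>" and B_int: "\<And>i j. B$i$j \<in> \<int>"
    and "A *v b = mu *\<^sub>R b" "B *v b = lam *\<^sub>R b" "b$1 \<noteq> 0"
    and "trace B = lam + 1 / lam" "1 < lam"
  shows "A ** B = B ** A"
proof (rule ccontr)
  assume "A ** B \<noteq> B ** A"
  define K where "K = A ** B - B ** A"
  have K_int: "K$i$j \<in> \<int>" for i j
    using A_int B_int by (simp add: K_def matrix_matrix_mult_2)
  have "K *v b = 0"
    using assms(3,4) by (simp add: K_def matrix_vector_mult_diff_rdistrib matrix_vector_mult_scaleR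
        flip: matrix_vector_mul_assoc)
  then have K_b: "K$i$1 * b$1 + K$i$2 * b$2 = 0" for i
    by (metis matrix_vector_mult_2 zero_index)
  obtain i where "K$i$2 \<noteq> 0"
  proof (rule ccontr)
    assume "\<not> thesis"
    then have "K$i$2 = 0" for i
      using that by blast
    then have "K$i$j = 0" for i j
      using K_b[of i] \<open>b$1 \<noteq> 0\<close> exhaust_2[of j] by auto
    then show False
      using \<open>A ** B \<noteq> B ** A\<close> by (simp add: K_def vec_eq_iff)
  qed
  then have "b$2 / b$1 = - K$i$1 / K$i$2"
    using K_b[of i] \<open>b$1 \<noteq> 0\<close> by (simp add: field_simps)
  then have slope: "b$2 / b$1 \<in> \<rat>"
    using K_int Ints_subset_Rats by (metis Rats_divide Rats_minus_iff subsetD)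
  have "lam = B$1$1 + B$1$2 * (b$2 / b$1)"
    using assms(4) \<open>b$1 \<noteq> 0\<close> by (simp add: vec_eq_iff matrix_vector_mult_2 field_simps)
  then have "lam \<in> \<rat>"
    using slope B_int Ints_subset_Rats by (metis Rats_add Rats_mult subsetD)
  moreover have "lam + 1 / lam \<in> \<int>"
    using B_int assms(6) by (metis Ints_add trace_2)
  ultimately have "lam = 1"
    using Rats_plus_inverse_in_Ints_eq_1 \<open>1 < lam\<close> by simp
  then show False
    using \<open>1 < lam\<close> by simp
qed

lemma independent_eigenvectors_invertible:
  fixes A B :: mat2
  assumes "\<And>i j. A$i$j \<in> \<int>" "\<And>i j. B$i$j \<in> \<int>" "A ** B \<noteq> B ** A"
    and "A *v a = mu *\<^sub>R a" "a \<noteq> 0"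
    and "B *v b = lam *\<^sub>R b" "b$1 \<noteq> 0" "trace B = lam + 1 / lam" "1 < lam"
  shows "invertible (columns2 a b)"
proof (rule ccontr)
  assume "\<not> ?thesis"
  then have "a$1 * b$2 = b$1 * a$2"
    by (simp add: invertible_det_nz det_2)
  then have a_b: "a = (a$1 / b$1) *\<^sub>R b"
    using \<open>b$1 \<noteq> 0\<close> by (simp add: vec_eq_iff forall_2 field_simps)
  with \<open>a \<noteq> 0\<close> have "a$1 / b$1 \<noteq> 0"
    by auto
  moreover have "(a$1 / b$1) *\<^sub>R (A *v b) = (a$1 / b$1) *\<^sub>R (mu *\<^sub>R b)"
    using assms(4) a_b by (metis matrix_vector_mult_scaleR scaleR_left_commute)
  ultimately have "A *v b = mu *\<^sub>R b"
    by (metis scaleR_cancel_left)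
  then show False
    using common_eigenvector_imp_commute assms by blast
qed

text \<open>\<open>P\<close> has the attracting eigenvectors of \<open>A\<close> and \<open>B\<close> as columns; they are independent
  because \<open>A\<close> and \<open>B\<close> do not commute.\<close>

lemma SL2Z_nonneg_pair_triangularize:
  assumes A: "A \<in> SL2Z_nonneg" and B: "B \<in> SL2Z_nonneg"
    and "A ** B \<noteq> B ** A" "trace A < trace B"
  obtains P mu lam p s where "invertible P" "1 \<le> mu" "mu < lam" "0 \<le> p" "0 < s"
    "A ** P = P ** upper_triangular2 mu p" "B ** P = P ** lower_triangular2 lam s"
proof -
  have int: "\<And>i j. A$i$j \<in> \<int>" "\<And>i j. B$i$j \<in> \<int>"
    using A B by (simp_all add: SL2Z_nonneg_def)
  have "A \<noteq> mat 1"
    using \<open>A ** B \<noteq> B ** A\<close> by auto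
  then obtain mu a w where mu: "1 \<le> mu" "trace A = mu + 1 / mu" and "0 \<le> a" "a \<noteq> 0" "0 \<le> w"
    and A_a: "A *v a = mu *\<^sub>R a" and A_x: "\<And>x. A *v x = (1 / mu) *\<^sub>R x + (w \<bullet> x) *\<^sub>R a"
    using SL2Z_nonneg_rank_one_decomposition[OF A] by metis
  have "2 < trace B"
    using SL2Z_nonneg_diagonal_ge_1[OF A] \<open>trace A < trace B\<close> by (simp add: trace_2)
  then have "B \<noteq> mat 1"
    by (auto simp: trace_2 mat_def)
  then obtain lam b v where lam: "1 \<le> lam" "trace B = lam + 1 / lam" and "0 \<le> b"
    and B_b: "B *v b = lam *\<^sub>R b" and B_x: "\<And>x. B *v x = (1 / lam) *\<^sub>R x + (v \<bullet> x) *\<^sub>R b"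
    and hyperbolic: "1 < lam \<Longrightarrow> (\<forall>i. 0 < b$i) \<and> (\<forall>i. 0 < v$i)"
    using SL2Z_nonneg_rank_one_decomposition[OF B] by metis
  have "1 < lam"
    using lam \<open>2 < trace B\<close> by (cases "lam = 1") auto
  then have "0 < b$i" "0 < v$i" for i
    using hyperbolic by auto
  have "0 \<le> w \<bullet> b"
    using \<open>0 \<le> w\<close> \<open>0 \<le> b\<close> by (simp add: inner_vec_def less_eq_vec_def sum_nonneg)
  moreover have "0 < v \<bullet> a"
    using inner_pos_nonneg \<open>\<And>i. 0 < v$i\<close> \<open>0 \<le> a\<close> \<open>a \<noteq> 0\<close> by blast
  moreover have "mu < lam"
    using plus_inverse_less_imp_less mu lam \<open>trace A < trace B\<close> by simp
  moreover have "invertible (columns2 a b)"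
    using independent_eigenvectors_invertible[OF int \<open>A ** B \<noteq> B ** A\<close> A_a \<open>a \<noteq> 0\<close> B_b]
      \<open>0 < b$1\<close> lam \<open>1 < lam\<close> by simp
  moreover have "A ** columns2 a b = columns2 a b ** upper_triangular2 mu (w \<bullet> b)"
    unfolding upper_triangular2_def
    by (rule matrix_mult_columns2) (simp add: A_a, simp add: A_x add.commute)
  moreover have "B ** columns2 a b = columns2 a b ** lower_triangular2 lam (v \<bullet> a)"
    unfolding lower_triangular2_def
    by (rule matrix_mult_columns2) (simp add: B_x, simp add: B_b)
  ultimately show thesis
    using that mu(1) by blast
qed

lemma trace_phi_lt_trace_replicate_Lb:
  assumes A: "A \<in> SL2Z_nonneg" and B: "B \<in> SL2Z_nonneg"
    and "A ** B \<noteq> B ** A" "trace A < trace B" "trace (A ** B) < trace (B ** B)"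
    and "La \<in> set u"
  shows "trace (phi A B u) < trace (phi A B (replicate (length u) Lb))"
proof -
  obtain P mu lam p s where "invertible P" "1 \<le> mu" "mu < lam" "0 \<le> p" "0 < s"
    and AP: "A ** P = P ** upper_triangular2 mu p" and BP: "B ** P = P ** lower_triangular2 lam s"
    using SL2Z_nonneg_pair_triangularize[OF assms(1-4)] by blast
  have similar: "trace (phi A B v) = trace (phi (upper_triangular2 mu p) (lower_triangular2 lam s) v)"
    for v
    by (rule trace_similar[OF phi_similar[OF AP BP] \<open>invertible P\<close>])
  have "trace (A ** B) \<in> \<int>" "trace (B ** B) \<in> \<int>"
    using A B by (simp_all add: SL2Z_nonneg_def trace_2 matrix_matrix_mult_2)
  then have "trace (A ** B) + 1 \<le> trace (B ** B)"
    using \<open>trace (A ** B) < trace (B ** B)\<close> by (auto elim!: Ints_cases)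
  then have "trace (upper_triangular2 mu p ** lower_triangular2 lam s) + 1
      \<le> trace (lower_triangular2 lam s ** lower_triangular2 lam s)"
    using similar[of "[La, Lb]"] similar[of "[Lb, Lb]"] by (simp add: phi_letter_def)
  then show ?thesis
    using trace_phi_lt_triangular2[OF \<open>1 \<le> mu\<close> \<open>mu < lam\<close> \<open>0 \<le> p\<close> \<open>0 < s\<close>]
      \<open>La \<in> set u\<close> similar trace_phi_replicate_lower_triangular2 by simp
qed

section \<open>Optimal words\<close>

lemma wpow_Suc_0 [simp]: "wpow u (Suc 0) = u"
  by (simp add: wpow_def)

lemma wpow_singleton [simp]: "wpow [c] n = replicate n c"
  by (simp add: wpow_def)

lemma length_wpow [simp]: "length (wpow u n) = n * length u"
  by (induction n) (simp_all add: wpow_def)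

lemma wpow_replicate [simp]: "wpow (replicate m c) n = replicate (n * m) c"
  by (induction n) (simp_all add: wpow_def replicate_add)

lemma lyndon_replicate_imp_length_1:
  assumes "lyndon (replicate n c)"
  shows "n = 1"
proof (rule ccontr)
  assume "n \<noteq> 1"
  moreover have "n \<noteq> 0"
    using assms by (auto simp: lyndon_def)
  ultimately have "(replicate n c, rotate 1 (replicate n c)) \<in> lexord letter_less"
    using assms unfolding lyndon_def by (metis One_nat_def length_replicate less_one linorder_neqE_nat)
  moreover have "(replicate n c, replicate n c) \<notin> lexord letter_less"
    by (rule lexord_irreflexive) (simp add: letter_less_def)
  ultimately show False by simp
qed

lemma maximal_iff_replicate:
  assumes "\<And>u. u \<noteq> replicate (length u) c \<Longrightarrow> trw A B u < trw A B (replicate (length u) c)"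
  shows "maximal A B u \<longleftrightarrow> u \<noteq> [] \<and> u = replicate (length u) c"
proof
  assume "maximal A B u"
  then have "u \<noteq> []" and "wle A B [c] u"
    by (auto simp: maximal_def)
  then have "u \<noteq> []" and "trw A B (replicate (length u) c) \<le> trw A B u"
    by (auto simp: wle_def)
  then show "u \<noteq> [] \<and> u = replicate (length u) c"
    using assms[of u] by fastforce
next
  assume u: "u \<noteq> [] \<and> u = replicate (length u) c"
  have "trw A B v \<le> trw A B (replicate (length v) c)" for v
    using assms[of v] by (cases "v = replicate (length v) c") auto
  then have "trw A B (wpow v (length u)) \<le> trw A B (wpow u (length v))" for v
    using u by (metis length_wpow mult.commute wpow_replicate)
  then show "maximal A B u"
    using u by (simp add: maximal_def wle_def)
qed

lemma complete_optimal_singleton: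
  assumes dominant: "\<And>u. u \<noteq> replicate (length u) c \<Longrightarrow> trw A B u < trw A B (replicate (length u) c)"
  shows "complete_optimal A B {[c]}"
    and "complete_optimal A B S \<Longrightarrow> S = {[c]}"
proof -
  note maximal_iff = maximal_iff_replicate[OF dominant]
  show "complete_optimal A B {[c]}"
    unfolding complete_optimal_def
  proof (intro conjI ballI allI impI)
    fix u assume "maximal A B u"
    then have "0 < length u" "u = wpow (rotate 0 [c]) (length u)"
      by (simp_all add: maximal_iff)
    then show "\<exists>w\<in>{[c]}. \<exists>k j. 0 < k \<and> u = wpow (rotate j w) k"
      by blast
  qed (auto simp: maximal_iff lyndon_def)
  assume S: "complete_optimal A B S"
  have "w = [c]" if "w \<in> S" for w
  proof -
    have "maximal A B w" "lyndon w"
      using S that by (auto simp: complete_optimal_def)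
    then have "w = replicate (length w) c" "lyndon (replicate (length w) c)"
      by (auto simp: maximal_iff)
    then show "w = [c]"
      using lyndon_replicate_imp_length_1 by (metis One_nat_def replicate_0 replicate_Suc)
  qed
  moreover have "S \<noteq> {}"
    using S maximal_iff[of "[c]"] by (auto simp: complete_optimal_def)
  ultimately show "S = {[c]}" by blast
qed

theorem theorem5p7:
  fixes A B :: "real^2^2"
  assumes "A \<in> SL2Z_nonneg" and "B \<in> SL2Z_nonneg"
    and "A ** B \<noteq> B ** A"
    and "well_oriented A B"
    and "trace A < trace B"
    and "trace (A ** B) < trace (B ** B)"
  shows "complete_optimal A B {[Lb]} \<and>
         (\<forall>S. complete_optimal A B S \<longrightarrow> S = {[Lb]})"
proof -
  have "trw A B u < trw A B (replicate (length u) Lb)" if "u \<noteq> replicate (length u) Lb" for u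
  proof -
    have "La \<in> set u"
      using that by (metis letter.exhaust replicate_length_same)
    then show ?thesis
      unfolding trw_def using trace_phi_lt_trace_replicate_Lb assms(1-3,5,6) by blast
  qed
  then show ?thesis
    using complete_optimal_singleton by blast
qed

end
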